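(* Let $S$ be a set and let $d : S \times S \to \{0,1\}$ be a function satisfying, for all $x, x', x'' \in S$: $d(x,x) = 0$, $d(x,x') = d(x',x)$, and $d(x,x'') \le d(x,x') + d(x',x'')$. For a finite sequence $(x_1, \ldots, x_n)$ of elements of $S$ (repetitions allowed), $n \ge 1$, define its discrete uniqueness \[ U_d(x_1,\ldots,x_n) \coloneqq \frac{1}{n}\sum_{i=1}^{n} I\!\left(\bigwedge_{j=1}^{i-1} \bigl(d(x_i,x_j) \neq 0\bigr)\right), \] where $I$ of a proposition is $1$ if the proposition is true and $0$ otherwise (the empty conjunction, for $i=1$, is true). Then for every permutation $\sigma$ of $\{1,\ldots,n\}$, \[ U_d(x_{\sigma(1)},\ldots,x_{\sigma(n)}) = U_d(x_1,\ldots,x_n). \]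
   Context: In the paper, $S$ is a space of crystals, $(x_1,\ldots,x_n)$ is the list of generated samples in generation order, and $d$ is a discrete (0/1-valued) crystal distance function; the theorem states that discrete uniqueness defined via such a $d$ that is a genuine pseudometric is invariant under permutation of the generated samples. *)

theory Defs
  imports Complex_Main "HOL-Combinatorics.Permutations"
begin

definition discrete_uniqueness :: "('a \<Rightarrow> 'a \<Rightarrow> nat) \<Rightarrow> 'a list \<Rightarrow> real" where
  "discrete_uniqueness d xs =
     (1 / real (length xs)) *
     (\<Sum>i<length xs. (if (\<forall>j<i. d (xs ! i) (xs ! j) \<noteq> 0) then 1 else 0))"

end

theory Submission
  imports Defs
begin

text \<open>Points at distance zero form an equivalence relation, and the indices counted in
  the discrete uniqueness are exactly the first occurrences of its classes along the list.
  Hence n U_d is the number of classes met by the samples, which depends only on the set of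
  samples and is therefore invariant under permutation.\<close>

definition zero_distance_rel :: "'a set \<Rightarrow> ('a \<Rightarrow> 'a \<Rightarrow> nat) \<Rightarrow> ('a \<times> 'a) set" where
  "zero_distance_rel S d = {(x, y) \<in> S \<times> S. d x y = 0}"

lemma equiv_zero_distance_rel:
  fixes d :: "'a \<Rightarrow> 'a \<Rightarrow> nat"
  assumes refl: "\<forall>x\<in>S. d x x = 0"
    and sym: "\<forall>x\<in>S. \<forall>y\<in>S. d x y = d y x"
    and tri: "\<forall>x\<in>S. \<forall>y\<in>S. \<forall>z\<in>S. d x z \<le> d x y + d y z"
  shows "equiv S (zero_distance_rel S d)"
proof (rule equivI)
  show "refl_on S (zero_distance_rel S d)"
    using refl by (auto simp: refl_on_def zero_distance_rel_def)
  show "Relation.sym (zero_distance_rel S d)"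
    using sym by (auto simp: sym_def zero_distance_rel_def)
  show "trans (zero_distance_rel S d)"
  proof (rule transI)
    fix x y z
    assume "(x, y) \<in> zero_distance_rel S d" "(y, z) \<in> zero_distance_rel S d"
    then show "(x, z) \<in> zero_distance_rel S d"
      using tri by (fastforce simp: zero_distance_rel_def)
  qed
qed (auto simp: zero_distance_rel_def)

lemma equiv_class_in_quotient_iff:
  assumes "equiv A r" "x \<in> A" "set xs \<subseteq> A"
  shows "r``{x} \<in> set xs // r \<longleftrightarrow> (\<exists>j<length xs. (x, xs ! j) \<in> r)"
proof -
  have "r``{x} \<in> set xs // r \<longleftrightarrow> (\<exists>y\<in>set xs. r``{x} = r``{y})"
    by (auto simp: quotient_def)
  also have "\<dots> \<longleftrightarrow> (\<exists>y\<in>set xs. (x, y) \<in> r)"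
    using eq_equiv_class_iff[OF assms(1,2)] assms(3) by blast
  finally show ?thesis
    by (metis in_set_conv_nth)
qed

lemma sum_first_in_class_eq_card_quotient:
  assumes "equiv A r" "set xs \<subseteq> A"
  shows "(\<Sum>i<length xs. if \<forall>j<i. (xs ! i, xs ! j) \<notin> r then 1 else 0)
    = (of_nat (card (set xs // r)) :: 'b::semiring_1)"
  using assms(2)
proof (induction xs rule: rev_induct)
  case Nil
  then show ?case by simp
next
  case (snoc x xs)
  then have "x \<in> A" "set xs \<subseteq> A" by auto
  have "finite (set xs // r)"
    by (simp add: quotient_def)
  have prefix: "(\<Sum>i<length xs. if \<forall>j<i. ((xs @ [x]) ! i, (xs @ [x]) ! j) \<notin> r then 1 else 0)
      = (\<Sum>i<length xs. if \<forall>j<i. (xs ! i, xs ! j) \<notin> r then 1 else (0 :: 'b))"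
    by (intro sum.cong) (auto simp: nth_append)
  have "(\<Sum>i<length (xs @ [x]). if \<forall>j<i. ((xs @ [x]) ! i, (xs @ [x]) ! j) \<notin> r then 1 else 0)
      = (\<Sum>i<length xs. if \<forall>j<i. (xs ! i, xs ! j) \<notin> r then 1 else 0)
        + (if \<forall>j<length xs. (x, xs ! j) \<notin> r then 1 else (0 :: 'b))"
    using prefix by (simp add: nth_append)
  also have "\<dots> = of_nat (card (set xs // r))
        + (if r``{x} \<in> set xs // r then 0 else 1)"
    using snoc.IH \<open>set xs \<subseteq> A\<close> equiv_class_in_quotient_iff[OF assms(1) \<open>x \<in> A\<close> \<open>set xs \<subseteq> A\<close>] by auto
  also have "\<dots> = of_nat (card (set (xs @ [x]) // r))"
    using \<open>finite (set xs // r)\<close> by (simp add: quotient_def card_insert_if add.commute)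
  finally show ?case .
qed

lemma discrete_uniqueness_eq_card_quotient:
  fixes d :: "'a \<Rightarrow> 'a \<Rightarrow> nat"
  assumes "equiv S (zero_distance_rel S d)" "set xs \<subseteq> S"
  shows "discrete_uniqueness d xs = card (set xs // zero_distance_rel S d) / length xs"
proof -
  have "(\<Sum>i<length xs. if \<forall>j<i. d (xs ! i) (xs ! j) \<noteq> 0 then 1 else 0)
      = (\<Sum>i<length xs. if \<forall>j<i. (xs ! i, xs ! j) \<notin> zero_distance_rel S d then 1 else (0 :: real))"
    using assms(2) by (intro sum.cong) (auto simp: zero_distance_rel_def subset_iff intro: nth_mem)
  then show ?thesis
    using sum_first_in_class_eq_card_quotient[OF assms, where 'b = real] by (simp add: discrete_uniqueness_def)
qed

theorem mainTheorem1:
  fixes S :: "'a set" and d :: "'a \<Rightarrow> 'a \<Rightarrow> nat" and xs :: "'a list" and \<sigma> :: "nat \<Rightarrow> nat"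
  assumes d_range: "\<forall>x\<in>S. \<forall>y\<in>S. d x y \<in> {0, 1}"
    and d_refl: "\<forall>x\<in>S. d x x = 0"
    and d_sym: "\<forall>x\<in>S. \<forall>y\<in>S. d x y = d y x"
    and d_tri: "\<forall>x\<in>S. \<forall>y\<in>S. \<forall>z\<in>S. d x z \<le> d x y + d y z"
    and xs_in: "set xs \<subseteq> S"
    and n_pos: "length xs \<ge> 1"
    and perm: "\<sigma> permutes {..<length xs}"
  shows "discrete_uniqueness d (map (\<lambda>i. xs ! \<sigma> i) [0..<length xs]) = discrete_uniqueness d xs"
proof -
  have equiv: "equiv S (zero_distance_rel S d)"
    using d_refl d_sym d_tri by (rule equiv_zero_distance_rel)
  have "map (\<lambda>i. xs ! \<sigma> i) [0..<length xs] = permute_list \<sigma> xs"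
    by (simp add: permute_list_def)
  moreover have "set (permute_list \<sigma> xs) = set xs" "length (permute_list \<sigma> xs) = length xs"
    using perm by simp_all
  ultimately show ?thesis
    using discrete_uniqueness_eq_card_quotient[OF equiv] xs_in by simp
qed

end
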